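(* Let $c>0$ and $P\ge 1$ be constants, and let $$\Omega=\{(u,v,L,A): 0\le A\le 1;\ u,v,L\ge 0;\ uv\le 1;\ uv\le L\le P\sqrt{uv}\},\qquad \Omega_0=\{(u,v,A): 0\le A\le 1;\ u,v\ge 0;\ uv\le 1\}.$$ There is no smooth function $B$ on $\Omega$ such that: (1) $0\le B(u,v,L,A)\le u$ on $\Omega$; (2) $\frac{\partial B}{\partial A}\ge c\,u\,L$ on $\Omega$; (3) $B$ is concave, i.e. $-d^2B\ge 0$ (the Hessian of $B$ is nonpositive definite) on $\Omega$; (4) the function $B_0(u,v,A):=\sup_{L:\,uv\le L\le P\sqrt{uv}}B(u,v,L,A)$ is concave on $\Omega_0$. *)

theory Defs
  imports "HOL-Analysis.Analysis"
begin

type_synonym pt4 = "real \<times> real \<times> real \<times> real"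
type_synonym pt3 = "real \<times> real \<times> real"

fun Ck_on :: "nat \<Rightarrow> 'a::real_normed_vector set \<Rightarrow> ('a \<Rightarrow> real) \<Rightarrow> bool" where
  "Ck_on 0 U f = continuous_on U f"
| "Ck_on (Suc k) U f = (f differentiable_on U \<and>
      (\<forall>v. Ck_on k U (\<lambda>x. frechet_derivative f (at x) v)))"

definition smooth_on :: "'a::real_normed_vector set \<Rightarrow> ('a \<Rightarrow> real) \<Rightarrow> bool" where
  "smooth_on S f \<longleftrightarrow> (\<exists>U. open U \<and> S \<subseteq> U \<and> (\<forall>k. Ck_on k U f))"

definition dderiv :: "('a::real_normed_vector \<Rightarrow> real) \<Rightarrow> 'a \<Rightarrow> 'a \<Rightarrow> real" where
  "dderiv f x h = frechet_derivative f (at x) h"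

definition hess :: "('a::real_normed_vector \<Rightarrow> real) \<Rightarrow> 'a \<Rightarrow> 'a \<Rightarrow> real" where
  "hess f x h = frechet_derivative (\<lambda>y. frechet_derivative f (at y) h) (at x) h"

text \<open>Concavity on a possibly non-convex domain: concave on every segment contained in it.\<close>
definition locally_concave_on :: "'a::real_vector set \<Rightarrow> ('a \<Rightarrow> real) \<Rightarrow> bool" where
  "locally_concave_on S f \<longleftrightarrow>
     (\<forall>x y. closed_segment x y \<subseteq> S \<longrightarrow> concave_on (closed_segment x y) f)"

definition Omega :: "real \<Rightarrow> pt4 set" where
  "Omega P = {(u, v, L, A). 0 \<le> A \<and> A \<le> 1 \<and> 0 \<le> u \<and> 0 \<le> v \<and> 0 \<le> L \<and> u * v \<le> 1
               \<and> u * v \<le> L \<and> L \<le> P * sqrt (u * v)}"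

definition Omega0 :: "pt3 set" where
  "Omega0 = {(u, v, A). 0 \<le> A \<and> A \<le> 1 \<and> 0 \<le> u \<and> 0 \<le> v \<and> u * v \<le> 1}"

definition B0 :: "real \<Rightarrow> (pt4 \<Rightarrow> real) \<Rightarrow> pt3 \<Rightarrow> real" where
  "B0 P B = (\<lambda>(u, v, A). Sup {B (u, v, L, A) | L. u * v \<le> L \<and> L \<le> P * sqrt (u * v)})"

end

theory Submission
  imports Defs
begin

text \<open>Write \<open>b = B0 P B\<close>. The bound on the \<open>A\<close>-derivative makes \<open>b\<close> grow by at least \<open>c u / 4\<close>
  from \<open>A = 3/4\<close> to \<open>A = 1\<close> on the hyperbola \<open>u v = 1\<close>. Concavity of \<open>b\<close> on the segments from
  \<open>(0, v, 0)\<close> to \<open>(4u/3, v, 1)\<close> and from \<open>(0, 2v, 3/4)\<close> to \<open>(2u, v/2, 3/4)\<close>, which stay in \<open>\<Omega>\<^sub>0\<close>,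
  together with \<open>b \<ge> 0\<close> turns this into \<open>b (2u, v/2, 3/4) \<le> 2 b (u, v, 3/4) - c u / 2\<close> whenever
  \<open>u v = 3/4\<close>. Hence \<open>b (2\<^sup>n, 3 / (4\<cdot>2\<^sup>n), 3/4) / 2\<^sup>n\<close> drops by \<open>c/4\<close> at every doubling and
  eventually becomes negative.\<close>

lemma smooth_on_imp_differentiable_at:
  assumes "smooth_on S f" and "x \<in> S"
  shows "f differentiable (at x)"
proof -
  obtain U where "open U" "S \<subseteq> U" "Ck_on (Suc 0) U f"
    using assms(1) unfolding smooth_on_def by blast
  then show ?thesis
    using assms(2) differentiable_on_eq_differentiable_at by auto
qed

lemma dderiv_has_real_derivative_line:
  fixes f :: "'a::real_normed_vector \<Rightarrow> real"
  assumes "f differentiable (at (x + t *\<^sub>R h))"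
  shows "((\<lambda>s. f (x + s *\<^sub>R h)) has_real_derivative dderiv f (x + t *\<^sub>R h) h) (at t)"
proof -
  let ?D = "frechet_derivative f (at (x + t *\<^sub>R h))"
  have f': "(f has_derivative ?D) (at (x + t *\<^sub>R h))"
    using assms frechet_derivative_works by blast
  have "((\<lambda>s. x + s *\<^sub>R h) has_derivative (\<lambda>s. s *\<^sub>R h)) (at t)"
    by (intro derivative_eq_intros) auto
  from has_derivative_compose[OF this f']
  have "((\<lambda>s. f (x + s *\<^sub>R h)) has_derivative (\<lambda>s. ?D (s *\<^sub>R h))) (at t)"
    by (simp add: o_def)
  moreover have "?D (s *\<^sub>R h) = dderiv f (x + t *\<^sub>R h) h * s" for s
    using linear_scale[OF has_derivative_linear[OF f']] by (simp add: dderiv_def)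
  ultimately show ?thesis
    by (simp add: has_field_derivative_def mult_commute_abs)
qed

lemma locally_concave_onD:
  assumes "locally_concave_on S f" and "closed_segment x y \<subseteq> S"
    and "0 \<le> t" and "t \<le> 1"
  shows "(1 - t) * f x + t * f y \<le> f ((1 - t) *\<^sub>R x + t *\<^sub>R y)"
  using assms concave_onD[of "closed_segment x y" f] unfolding locally_concave_on_def
  by (meson ends_in_segment)

lemma Omega_iff:
  "(u, v, L, A) \<in> Omega P \<longleftrightarrow> (u, v, A) \<in> Omega0 \<and> L \<in> {u * v..P * sqrt (u * v)}"
  by (auto simp: Omega_def Omega0_def intro: order_trans[OF mult_nonneg_nonneg])

lemma Omega_fiber_lower_end:
  assumes "P \<ge> 1" and "(u, v, A) \<in> Omega0"
  shows "u * v \<in> {u * v..P * sqrt (u * v)}"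
proof -
  have w: "0 \<le> u * v" "u * v \<le> 1"
    using assms(2) by (auto simp: Omega0_def)
  then have "(u * v)\<^sup>2 \<le> u * v"
    by (simp add: power2_eq_square mult_left_le)
  then have "u * v \<le> sqrt (u * v)"
    by (rule real_le_rsqrt)
  also have "\<dots> \<le> P * sqrt (u * v)"
    using assms(1) w by (simp add: mult_le_cancel_right1)
  finally show ?thesis by simp
qed

lemma closed_segment_Omega0_vertical:
  fixes u v :: real
  assumes "0 \<le> u" "0 \<le> v" "u * v \<le> 1"
  shows "closed_segment (0, v, 0::real) (u, v, 1) \<subseteq> Omega0"
proof
  fix z assume "z \<in> closed_segment (0, v, 0::real) (u, v, 1)"
  then obtain t where t: "0 \<le> t" "t \<le> 1"
    and "z = (1 - t) *\<^sub>R (0, v, 0) + t *\<^sub>R (u, v, 1)"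
    unfolding closed_segment_def by blast
  then have z: "z = (t * u, v, t)"
    by (simp add: algebra_simps)
  have "t * (u * v) \<le> 1"
    using t assms by (simp add: mult_le_one)
  then show "z \<in> Omega0"
    using t z assms by (simp add: Omega0_def mult.assoc)
qed

lemma closed_segment_Omega0_horizontal:
  fixes u v A :: real
  assumes "0 \<le> u" "0 \<le> v" "u * v \<le> 3/4" "0 \<le> A" "A \<le> 1"
  shows "closed_segment (0, 2 * v, A) (2 * u, v / 2, A) \<subseteq> Omega0"
proof
  fix z assume "z \<in> closed_segment (0, 2 * v, A) (2 * u, v / 2, A)"
  then obtain t where t: "0 \<le> t" "t \<le> 1"
    and "z = (1 - t) *\<^sub>R (0, 2 * v, A) + t *\<^sub>R (2 * u, v / 2, A)"
    unfolding closed_segment_def by blast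
  then have z: "z = (t * (2 * u), (1 - t) * (2 * v) + t * (v / 2), A)"
    by (simp add: algebra_simps)
  have "0 \<le> (3 * t - 2)\<^sup>2"
    by simp
  then have quadratic: "t * (4 - 3 * t) \<le> 4/3"
    by (simp add: power2_eq_square algebra_simps)
  have "t * (2 * u) * ((1 - t) * (2 * v) + t * (v / 2)) = (u * v) * (t * (4 - 3 * t))"
    by (simp add: algebra_simps)
  also have "\<dots> \<le> 3/4 * (4/3)"
    using t assms quadratic by (intro mult_mono) auto
  finally have "t * (2 * u) * ((1 - t) * (2 * v) + t * (v / 2)) \<le> 1"
    by simp
  then show "z \<in> Omega0"
    using t z assms by (simp add: Omega0_def)
qed

lemma locally_concave_Omega0_doubling:
  fixes b :: "pt3 \<Rightarrow> real"
  assumes conc: "locally_concave_on Omega0 b"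
    and nonneg: "\<And>x. x \<in> Omega0 \<Longrightarrow> 0 \<le> b x"
    and incr: "\<And>u v. 0 \<le> u \<Longrightarrow> 0 \<le> v \<Longrightarrow> u * v = 1 \<Longrightarrow> b (u, v, 3/4) + k * u \<le> b (u, v, 1)"
    and uv: "0 \<le> u" "0 \<le> v" "u * v = 3/4"
  shows "b (2 * u, v / 2, 3/4) + 2 * k * u \<le> 2 * b (u, v, 3/4)"
proof -
  have "(1/4) * b (0, v, 0) + (3/4) * b (4 * u / 3, v, 1) \<le> b (u, v, 3/4)"
    using locally_concave_onD[OF conc closed_segment_Omega0_vertical, of "4 * u / 3" v "3/4"] uv
    by (simp add: algebra_simps)
  moreover have "0 \<le> b (0, v, 0)"
    using nonneg uv by (simp add: Omega0_def)
  moreover have "b (4 * u / 3, v, 3/4) + k * (4 * u / 3) \<le> b (4 * u / 3, v, 1)"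
    using incr[of "4 * u / 3" v] uv by simp
  moreover have "(1/3) * b (0, 2 * v, 3/4) + (2/3) * b (2 * u, v / 2, 3/4) \<le> b (4 * u / 3, v, 3/4)"
    using locally_concave_onD[OF conc closed_segment_Omega0_horizontal, of u v "3/4" "2/3"] uv
    by (simp add: algebra_simps)
  moreover have "0 \<le> b (0, 2 * v, 3/4)"
    using nonneg uv by (simp add: Omega0_def)
  ultimately show ?thesis by linarith
qed

lemma locally_concave_Omega0_iterated_doubling:
  fixes b :: "pt3 \<Rightarrow> real"
  assumes conc: "locally_concave_on Omega0 b"
    and nonneg: "\<And>x. x \<in> Omega0 \<Longrightarrow> 0 \<le> b x"
    and incr: "\<And>u v. 0 \<le> u \<Longrightarrow> 0 \<le> v \<Longrightarrow> u * v = 1 \<Longrightarrow> b (u, v, 3/4) + k * u \<le> b (u, v, 1)"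
  shows "b (2 ^ n, 3 / (4 * 2 ^ n), 3/4) \<le> 2 ^ n * (b (1, 3/4, 3/4) - n * k)"
proof (induction n)
  case 0
  then show ?case by simp
next
  case (Suc n)
  have uv: "0 \<le> (2::real) ^ n" "0 \<le> 3 / (4 * (2::real) ^ n)" "(2::real) ^ n * (3 / (4 * 2 ^ n)) = 3/4"
    by simp_all
  have "b (2 * 2 ^ n, 3 / (4 * 2 ^ n) / 2, 3/4) + 2 * k * 2 ^ n \<le> 2 * b (2 ^ n, 3 / (4 * 2 ^ n), 3/4)"
    by (rule locally_concave_Omega0_doubling[OF conc nonneg incr uv])
  moreover have "(2::real) * 2 ^ n = 2 ^ Suc n" "3 / (4 * 2 ^ n) / 2 = 3 / (4 * (2::real) ^ Suc n)"
    by simp_all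
  ultimately have "b (2 ^ Suc n, 3 / (4 * 2 ^ Suc n), 3/4) \<le> 2 * b (2 ^ n, 3 / (4 * 2 ^ n), 3/4) - 2 * k * 2 ^ n"
    by (simp only:)
  also have "\<dots> \<le> 2 * (2 ^ n * (b (1, 3/4, 3/4) - n * k)) - 2 * k * 2 ^ n"
    using Suc.IH by linarith
  also have "\<dots> = 2 ^ Suc n * (b (1, 3/4, 3/4) - Suc n * k)"
    by (simp add: algebra_simps)
  finally show ?case .
qed

lemma no_nonneg_locally_concave_Omega0_with_increment:
  fixes b :: "pt3 \<Rightarrow> real"
  assumes conc: "locally_concave_on Omega0 b"
    and nonneg: "\<And>x. x \<in> Omega0 \<Longrightarrow> 0 \<le> b x"
    and incr: "\<And>u v. 0 \<le> u \<Longrightarrow> 0 \<le> v \<Longrightarrow> u * v = 1 \<Longrightarrow> b (u, v, 3/4) + k * u \<le> b (u, v, 1)"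
    and "k > 0"
  shows False
proof -
  obtain n :: nat where "b (1, 3/4, 3/4) / k < n"
    using reals_Archimedean2 by blast
  then have "b (1, 3/4, 3/4) - n * k < 0"
    using \<open>k > 0\<close> by (simp add: field_simps)
  then have "2 ^ n * (b (1, 3/4, 3/4) - n * k) < 0"
    by (simp add: mult_pos_neg)
  moreover have "(2 ^ n, 3 / (4 * 2 ^ n), 3/4) \<in> Omega0"
    by (simp add: Omega0_def)
  ultimately show False
    using nonneg locally_concave_Omega0_iterated_doubling[OF conc nonneg incr, of n] by fastforce
qed

locale bellman_candidate =
  fixes P c :: real and B :: "pt4 \<Rightarrow> real"
  assumes P_ge_1: "P \<ge> 1"
    and smooth: "smooth_on (Omega P) B"
    and bounds: "\<And>u v L A. (u, v, L, A) \<in> Omega P \<Longrightarrow> 0 \<le> B (u, v, L, A) \<and> B (u, v, L, A) \<le> u"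
    and deriv_A: "\<And>u v L A. (u, v, L, A) \<in> Omega P \<Longrightarrow> c * u * L \<le> dderiv B (u, v, L, A) (0, 0, 0, 1)"
begin

lemma B_increment:
  assumes "(u, v, L, a') \<in> Omega P" and "0 \<le> a" and "a \<le> a'"
  shows "B (u, v, L, a) + c * u * L * (a' - a) \<le> B (u, v, L, a')"
proof -
  have mem: "(u, v, L, t) \<in> Omega P" if "a \<le> t" "t \<le> a'" for t
    using assms that by (simp add: Omega_def)
  have "B (u, v, L, a) - c * u * L * a \<le> B (u, v, L, a') - c * u * L * a'"
  proof (rule DERIV_nonneg_imp_nondecreasing[OF \<open>a \<le> a'\<close>])
    fix t assume t: "a \<le> t" "t \<le> a'"
    have "(u, v, L, t) = (u, v, L, 0) + t *\<^sub>R (0, 0, 0, 1)"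
      by simp
    then have "((\<lambda>s. B (u, v, L, s)) has_real_derivative dderiv B (u, v, L, t) (0, 0, 0, 1)) (at t)"
      using dderiv_has_real_derivative_line[of B "(u, v, L, 0)" t "(0, 0, 0, 1)"]
        smooth_on_imp_differentiable_at[OF smooth mem[OF t]]
      by simp
    then have "((\<lambda>s. B (u, v, L, s) - c * u * L * s) has_real_derivative
        dderiv B (u, v, L, t) (0, 0, 0, 1) - c * u * L) (at t)"
      by (intro derivative_eq_intros) auto
    moreover have "0 \<le> dderiv B (u, v, L, t) (0, 0, 0, 1) - c * u * L"
      using deriv_A[OF mem[OF t]] by simp
    ultimately show "\<exists>y. ((\<lambda>s. B (u, v, L, s) - c * u * L * s) has_real_derivative y) (at t) \<and> 0 \<le> y"
      by blast
  qed
  then show ?thesis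
    by (simp add: algebra_simps)
qed

lemma B0_eq_SUP: "B0 P B (u, v, A) = (SUP L\<in>{u * v..P * sqrt (u * v)}. B (u, v, L, A))"
proof -
  have "{L. u * v \<le> L \<and> L \<le> P * sqrt (u * v)} = {u * v..P * sqrt (u * v)}"
    by auto
  then show ?thesis
    unfolding B0_def by (simp add: setcompr_eq_image)
qed

lemma bdd_above_fiber:
  assumes "(u, v, A) \<in> Omega0"
  shows "bdd_above ((\<lambda>L. B (u, v, L, A)) ` {u * v..P * sqrt (u * v)})"
proof (rule bdd_aboveI2)
  fix L assume "L \<in> {u * v..P * sqrt (u * v)}"
  then show "B (u, v, L, A) \<le> u"
    using assms bounds[of u v L A] by (simp add: Omega_iff)
qed

lemma B_le_B0:
  assumes "(u, v, L, A) \<in> Omega P"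
  shows "B (u, v, L, A) \<le> B0 P B (u, v, A)"
  using assms unfolding B0_eq_SUP Omega_iff by (intro cSUP_upper bdd_above_fiber) auto

lemma B0_nonneg:
  assumes "x \<in> Omega0"
  shows "0 \<le> B0 P B x"
proof -
  obtain u v A where x: "x = (u, v, A)"
    by (metis prod_cases3)
  then have "(u, v, u * v, A) \<in> Omega P"
    using assms Omega_fiber_lower_end[OF P_ge_1] by (simp add: Omega_iff)
  then show ?thesis
    using bounds B_le_B0 x by (meson order_trans)
qed

lemma B0_increment:
  assumes "0 \<le> c" and "(u, v, a') \<in> Omega0" and "0 \<le> a" and "a \<le> a'"
  shows "B0 P B (u, v, a) + c * u * (u * v) * (a' - a) \<le> B0 P B (u, v, a')"
proof -
  have "B (u, v, L, a) \<le> B0 P B (u, v, a') - c * u * (u * v) * (a' - a)"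
    if L: "L \<in> {u * v..P * sqrt (u * v)}" for L
  proof -
    have "(u, v, L, a') \<in> Omega P"
      using assms(2) L by (simp add: Omega_iff)
    moreover have "c * u * (u * v) * (a' - a) \<le> c * u * L * (a' - a)"
      using assms L by (intro mult_right_mono mult_left_mono) (auto simp: Omega0_def)
    ultimately show ?thesis
      using B_increment[of u v L a' a] B_le_B0[of u v L a'] assms by linarith
  qed
  then have "B0 P B (u, v, a) \<le> B0 P B (u, v, a') - c * u * (u * v) * (a' - a)"
    unfolding B0_eq_SUP[of u v a]
    using Omega_fiber_lower_end[OF P_ge_1 assms(2)] by (intro cSUP_least) auto
  then show ?thesis by simp
qed

lemma B0_not_locally_concave:
  assumes "c > 0"
  shows "\<not> locally_concave_on Omega0 (B0 P B)"
proof
  assume conc: "locally_concave_on Omega0 (B0 P B)"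
  show False
  proof (rule no_nonneg_locally_concave_Omega0_with_increment[OF conc B0_nonneg, where k = "c / 4"])
    fix u v :: real assume "0 \<le> u" "0 \<le> v" "u * v = 1"
    then show "B0 P B (u, v, 3/4) + c / 4 * u \<le> B0 P B (u, v, 1)"
      using B0_increment[of u v 1 "3/4"] assms by (simp add: Omega0_def)
  qed (use assms in auto)
qed

end

theorem mainTheorem5:
  fixes c P :: real
  assumes "c > 0" and "P \<ge> 1"
  shows "\<not> (\<exists>B :: pt4 \<Rightarrow> real.
            smooth_on (Omega P) B
          \<and> (\<forall>u v L A. (u, v, L, A) \<in> Omega P \<longrightarrow> 0 \<le> B (u, v, L, A) \<and> B (u, v, L, A) \<le> u)
          \<and> (\<forall>u v L A. (u, v, L, A) \<in> Omega P \<longrightarrow>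
                 dderiv B (u, v, L, A) (0, 0, 0, 1) \<ge> c * u * L)
          \<and> (\<forall>x \<in> Omega P. \<forall>h. hess B x h \<le> 0)
          \<and> locally_concave_on Omega0 (B0 P B))"
  using bellman_candidate.B0_not_locally_concave[of P c] assms
  unfolding bellman_candidate_def by blast

end
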